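(* Let $N\in\mathbb{N}$, $a\ge0$, $b>0$, $\alpha:=a+b-1$, $\beta:=b-1$, and let $z_1\le\dots\le z_N$ be the ordered zeros of the Jacobi polynomial $P_N^{(\alpha,\beta)}$. Let $\tilde S=(\tilde s_{i,j})_{i,j=1,\dots,N}$ be the matrix with $$\tilde s_{j,j}=4\sum_{l\ne j}\frac{1-z_j^2}{(z_j-z_l)^2}+2(a+b)\frac{1+z_j}{1-z_j}+2b\frac{1-z_j}{1+z_j},\qquad \tilde s_{i,j}=\frac{-4\sqrt{(1-z_j^2)(1-z_i^2)}}{(z_i-z_j)^2}\ (i\ne j),$$ and let $\lambda_k:=2k(2N+\alpha+\beta+1-k)$. Then for each $k=2,\dots,N$ there exists a polynomial $p_k$ of degree at most $k-2$ such that the vector $v_k:=\bigl(z_1^{k-1}\sqrt{1-z_1^2},\dots,z_N^{k-1}\sqrt{1-z_N^2}\bigr)^T$ satisfies $$\tilde S v_k=\Bigl((\lambda_k z_1^{k-1}+p_k(z_1))\sqrt{1-z_1^2},\dots,(\lambda_k z_N^{k-1}+p_k(z_N))\sqrt{1-z_N^2}\Bigr)^T.$$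
   Context: $P_N^{(\alpha,\beta)}$ denotes the classical Jacobi polynomial of degree $N$, orthogonal on $]-1,1[$ with respect to the weight $(1-x)^\alpha(1+x)^\beta$; its zeros are simple and lie in $]-1,1[$. *)

theory Defs
  imports Complex_Main "HOL-Computational_Algebra.Polynomial"
begin

definition jacobiP :: "nat \<Rightarrow> real \<Rightarrow> real \<Rightarrow> real \<Rightarrow> real" where
  "jacobiP n al be x =
     (\<Sum>s=0..n. ((real n + al) gchoose (n - s)) * ((real n + be) gchoose s)
                 * ((x - 1) / 2) ^ s * ((x + 1) / 2) ^ (n - s))"

definition S_tilde :: "nat \<Rightarrow> real \<Rightarrow> real \<Rightarrow> (nat \<Rightarrow> real) \<Rightarrow> nat \<Rightarrow> nat \<Rightarrow> real" where
  "S_tilde N a b z i j =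
     (if i = j then
        4 * (\<Sum>l\<in>{1..N} - {j}. (1 - (z j)\<^sup>2) / (z j - z l)\<^sup>2)
        + 2 * (a + b) * (1 + z j) / (1 - z j) + 2 * b * (1 - z j) / (1 + z j)
      else - 4 * sqrt ((1 - (z j)\<^sup>2) * (1 - (z i)\<^sup>2)) / (z i - z j)\<^sup>2)"

end

theory Submission
  imports Defs
begin

(* Put m = k - 1, x = z i and w t = 1 - t^2.  The off-diagonal entries of S_tilde carry the factor
   sqrt (w x) * sqrt (w (z j)), so the i-th entry of S_tilde v_k is sqrt (w x) times
     4 * (sum over j ~= i of (w x * x^m - w (z j) * z j ^ m) / (x - z j)^2) + R x * x^m,
   where R is the rational function on the diagonal.  Each quotient equals g x / (x - z j) plus a
   polynomial in x of degree m with leading coefficient m + 1.  The Stieltjes relation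
     sum over j ~= i of 1 / (z i - z j) = ((alpha + beta + 2) z i + alpha - beta) / (2 (1 - z i ^ 2)),
   which is the Jacobi differential equation evaluated at its simple zeros, turns the poles into a
   rational function that cancels against R x.  What remains is lambda_k x^m plus a polynomial of
   degree < m: the N leading terms (m + 1) x^m of the polynomial parts supply the summand
   4 N (m + 1) x^m of lambda_k x^m. *)

section \<open>Jacobi polynomials\<close>

lemma gbinomial_pos:
  fixes a :: real
  assumes "a > real k - 1"
  shows "a gchoose k > 0"
  using assms by (simp add: gbinomial_pochhammer' pochhammer_pos)

lemma gbinomial_absorb_Suc:
  fixes a :: real
  shows "(a - real k) * (a gchoose k) = real (Suc k) * (a gchoose Suc k)"
  by (simp only: gbinomial_absorb_comp gbinomial_absorption)

definition jacobi_coeff :: "nat \<Rightarrow> real \<Rightarrow> real \<Rightarrow> nat \<Rightarrow> real" where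
  "jacobi_coeff n al be s = ((real n + al) gchoose (n - s)) * ((real n + be) gchoose s)"

lemma jacobiP_altdef:
  "jacobiP n al be x = (\<Sum>s=0..n. jacobi_coeff n al be s * (((x - 1) / 2) ^ s * ((x + 1) / 2) ^ (n - s)))"
  by (simp add: jacobiP_def jacobi_coeff_def mult.assoc)

lemma jacobi_coeff_pos:
  assumes "al > -1" "be > -1" "s \<le> n"
  shows "jacobi_coeff n al be s > 0"
  using assms by (auto simp: jacobi_coeff_def of_nat_diff intro!: mult_pos_pos gbinomial_pos)

lemma jacobiP_reflect: "jacobiP n al be (- x) = (-1) ^ n * jacobiP n be al x"
proof -
  have "jacobiP n al be (- x) =
      (\<Sum>s=0..n. ((real n + al) gchoose s) * ((real n + be) gchoose (n - s))
                 * ((- x - 1) / 2) ^ (n - s) * ((- x + 1) / 2) ^ s)"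
    unfolding jacobiP_def by (subst sum.atLeastAtMost_rev) (auto intro!: sum.cong)
  also have "\<dots> = (-1) ^ n * jacobiP n be al x"
    unfolding jacobiP_def sum_distrib_left
  proof (intro sum.cong refl)
    fix s assume "s \<in> {0..n}"
    then have sign: "(-1 :: real) ^ n = (-1) ^ (n - s) * (-1) ^ s"
      by (simp flip: power_add)
    have "(- x - 1) / 2 = (-1) * ((x + 1) / 2)" "(- x + 1) / 2 = (-1) * ((x - 1) / 2)"
      by (simp_all add: field_simps)
    then show "((real n + al) gchoose s) * ((real n + be) gchoose (n - s))
                 * ((- x - 1) / 2) ^ (n - s) * ((- x + 1) / 2) ^ s
        = (-1) ^ n * (((real n + be) gchoose (n - s)) * ((real n + al) gchoose s)
                 * ((x - 1) / 2) ^ s * ((x + 1) / 2) ^ (n - s))"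
      unfolding sign by (simp only: power_mult_distrib) (simp add: algebra_simps)
  qed
  finally show ?thesis .
qed

lemma jacobiP_pos:
  assumes "al > -1" "be > -1" "x \<ge> 1"
  shows "jacobiP n al be x > 0"
  unfolding jacobiP_altdef
proof (rule sum_pos2[of _ 0])
  show "0 < jacobi_coeff n al be 0 * (((x - 1) / 2) ^ 0 * ((x + 1) / 2) ^ (n - 0))"
    using jacobi_coeff_pos[OF assms(1,2), of 0 n] assms(3) by simp
  fix s assume "s \<in> {0..n}"
  with jacobi_coeff_pos[OF assms(1,2), of s n] assms(3)
  show "0 \<le> jacobi_coeff n al be s * (((x - 1) / 2) ^ s * ((x + 1) / 2) ^ (n - s))"
    by simp
qed simp_all

lemma jacobiP_root_bounds:
  assumes "al > -1" "be > -1" "jacobiP n al be x = 0"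
  shows "\<bar>x\<bar> < 1"
proof (rule ccontr)
  assume "\<not> \<bar>x\<bar> < 1"
  then consider "x \<ge> 1" | "- x \<ge> 1" by linarith
  then show False
  proof cases
    case 1
    with jacobiP_pos[OF assms(1,2), of x n] assms(3) show False by simp
  next
    case 2
    with jacobiP_pos[OF assms(2,1), of "- x" n] assms(3) jacobiP_reflect[of n al be "- x"]
    show False by simp
  qed
qed

lemma jacobi_coeff_shift:
  assumes "s < n"
  shows "jacobi_coeff n al be (Suc s) * (real (Suc s) * (real (Suc s) + al))
       = jacobi_coeff n al be s * (real (n - s) * (real (n - s) + be))"
proof -
  obtain k where k: "n - s = Suc k" using assms by (metis Suc_diff_Suc)
  then have k': "n - Suc s = k" "real (Suc s) + al = real n + al - real k" by simp_all
  have al_absorb: "(real n + al - real k) * ((real n + al) gchoose k) = real (n - s) * ((real n + al) gchoose (n - s))"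
    unfolding k by (rule gbinomial_absorb_Suc)
  have be_absorb: "real (Suc s) * ((real n + be) gchoose Suc s) = (real (n - s) + be) * ((real n + be) gchoose s)"
    using gbinomial_absorb_Suc[of "real n + be" s] assms by (simp add: of_nat_diff algebra_simps)
  have "jacobi_coeff n al be (Suc s) * (real (Suc s) * (real (Suc s) + al))
      = ((real n + al - real k) * ((real n + al) gchoose k)) * (real (Suc s) * ((real n + be) gchoose Suc s))"
    unfolding jacobi_coeff_def k' by (simp only: mult_ac)
  then show ?thesis
    unfolding al_absorb be_absorb jacobi_coeff_def by (simp only: mult_ac)
qed

lemma sum_atMost_shift_balance:
  fixes c d F :: "nat \<Rightarrow> 'a :: comm_ring_1"
  assumes "c 0 = 0" "d n = 0" "\<And>s. s < n \<Longrightarrow> c (Suc s) = d s"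
  shows "(\<Sum>s\<le>n. c s * F (s - 1) + d s * F (Suc s)) = (\<Sum>s\<le>n. (c s + d s) * F s)"
proof (cases n)
  case 0
  with assms(1,2) show ?thesis by simp
next
  case (Suc m)
  have "(\<Sum>s\<le>n. c s * F (s - 1)) = (\<Sum>s\<le>m. d s * F s)"
    unfolding Suc sum.atMost_Suc_shift using assms(1,3) Suc by simp
  also have "\<dots> = (\<Sum>s\<le>n. d s * F s)"
    using assms(2) Suc by simp
  finally have c_shift: "(\<Sum>s\<le>n. c s * F (s - 1)) = (\<Sum>s\<le>n. d s * F s)" .
  have "(\<Sum>s\<le>n. d s * F (Suc s)) = (\<Sum>s\<le>m. c (Suc s) * F (Suc s))"
    using assms(2,3) Suc by simp
  also have "\<dots> = (\<Sum>s\<le>n. c s * F s)"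
    unfolding Suc sum.atMost_Suc_shift using assms(1) by simp
  finally show ?thesis
    using c_shift by (simp add: sum.distrib distrib_right)
qed

lemma pderiv_sum: "pderiv (\<Sum>s\<in>A. f s) = (\<Sum>s\<in>A. pderiv (f s))"
  by (induction A rule: infinite_finite_induct) (simp_all add: pderiv_add)

lemma pderiv_jacobi_basis:
  "pderiv ([:-1/2, 1/2:] ^ s * [:1/2, 1/2:] ^ d :: real poly)
     = smult (real s / 2) ([:-1/2, 1/2:] ^ (s - 1) * [:1/2, 1/2:] ^ d)
     + smult (real d / 2) ([:-1/2, 1/2:] ^ s * [:1/2, 1/2:] ^ (d - 1))"
  by (simp add: pderiv_mult pderiv_power pderiv_pCons algebra_simps)

(* F (s - 1) at s = 0 and F (Suc s) at s = n are junk values of the truncated subtraction,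
   but their coefficients vanish. *)
lemma jacobi_operator_basis:
  fixes x al be :: real and s n :: nat
  assumes "s \<le> n"
  defines "q \<equiv> [:-1/2, 1/2:] ^ s * [:1/2, 1/2:] ^ (n - s)"
    and "F \<equiv> \<lambda>t. ((x - 1) / 2) ^ t * ((x + 1) / 2) ^ (n - t)"
  shows "(1 - x\<^sup>2) * poly (pderiv (pderiv q)) x + (be - al - (al + be + 2) * x) * poly (pderiv q) x
           + real n * (real n + al + be + 1) * poly q x
       = (real s * (real s + al) + real (n - s) * (real (n - s) + be)) * F s
           - real s * (real s + al) * F (s - 1) - real (n - s) * (real (n - s) + be) * F (Suc s)"
proof -
  define u where "u = (x - 1) / 2"
  define v where "v = (x + 1) / 2"
  obtain d where n: "n = s + d" using assms(1) le_Suc_ex by blast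
  have poly_u: "poly [:-1/2, 1/2:] x = u" and poly_v: "poly [:1/2, 1/2:] x = v"
    by (simp_all add: u_def v_def field_simps)
  have x: "x = 2 * u + 1" and v: "v = u + 1"
    by (simp_all add: u_def v_def field_simps)
  have "s = 0 \<or> s = 1 \<or> (\<exists>s'. s = s' + 2)" "d = 0 \<or> d = 1 \<or> (\<exists>d'. d = d' + 2)"
    by presburger+
  then show ?thesis
    unfolding q_def F_def pderiv_jacobi_basis pderiv_add pderiv_smult poly_add poly_smult poly_mult poly_power
      poly_u poly_v u_def[symmetric] v_def[symmetric] n
    by (elim disjE exE; simp add: power_add x v field_simps power2_eq_square power3_eq_cube)
qed

definition jacobi_poly :: "nat \<Rightarrow> real \<Rightarrow> real \<Rightarrow> real poly" where
  "jacobi_poly n al be =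
     (\<Sum>s=0..n. smult (jacobi_coeff n al be s) ([:-1/2, 1/2:] ^ s * [:1/2, 1/2:] ^ (n - s)))"

lemma poly_jacobi_poly: "poly (jacobi_poly n al be) x = jacobiP n al be x"
proof -
  have "poly [:-1/2, 1/2:] x = (x - 1) / 2" "poly [:1/2, 1/2:] x = (x + 1) / 2"
    by (simp_all add: field_simps)
  then show ?thesis
    unfolding jacobi_poly_def jacobiP_altdef poly_sum poly_smult poly_mult poly_power by (simp only:)
qed

lemma degree_jacobi_poly: "degree (jacobi_poly n al be) \<le> n"
  unfolding jacobi_poly_def
proof (intro degree_sum_le order.trans[OF degree_smult_le] order.trans[OF degree_mult_le])
  fix s assume "s \<in> {0..n}"
  then show "degree ([:-1/2, 1/2:] ^ s :: real poly) + degree ([:1/2, 1/2:] ^ (n - s) :: real poly) \<le> n"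
    by (simp add: degree_power_eq)
qed simp

lemma jacobi_poly_ode:
  "(1 - x\<^sup>2) * poly (pderiv (pderiv (jacobi_poly n al be))) x
     + (be - al - (al + be + 2) * x) * poly (pderiv (jacobi_poly n al be)) x
     + real n * (real n + al + be + 1) * poly (jacobi_poly n al be) x = 0"
  (is "?L (jacobi_poly n al be) = 0")
proof -
  define c where "c s = jacobi_coeff n al be s * (real s * (real s + al))" for s
  define d where "d s = jacobi_coeff n al be s * (real (n - s) * (real (n - s) + be))" for s
  define q :: "nat \<Rightarrow> real poly" where "q s = [:-1/2, 1/2:] ^ s * [:1/2, 1/2:] ^ (n - s)" for s
  define F where "F = (\<lambda>t. ((x - 1) / 2) ^ t * ((x + 1) / 2) ^ (n - t))"
  have "jacobi_poly n al be = (\<Sum>s\<le>n. smult (jacobi_coeff n al be s) (q s))"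
    by (simp add: jacobi_poly_def q_def atLeast0AtMost)
  then have "?L (jacobi_poly n al be) = (\<Sum>s\<le>n. jacobi_coeff n al be s * ?L (q s))"
    by (simp add: pderiv_sum pderiv_smult poly_sum sum_distrib_left sum.distrib sum_subtractf algebra_simps)
  also have "\<dots> = (\<Sum>s\<le>n. (c s + d s) * F s - (c s * F (s - 1) + d s * F (Suc s)))"
  proof (intro sum.cong refl)
    fix s assume "s \<in> {..n}"
    then have Lq: "?L (q s) = (real s * (real s + al) + real (n - s) * (real (n - s) + be)) * F s
           - real s * (real s + al) * F (s - 1) - real (n - s) * (real (n - s) + be) * F (Suc s)"
      unfolding q_def F_def by (intro jacobi_operator_basis) simp
    show "jacobi_coeff n al be s * ?L (q s) = (c s + d s) * F s - (c s * F (s - 1) + d s * F (Suc s))"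
      unfolding Lq c_def d_def by (simp add: algebra_simps)
  qed
  also have "\<dots> = 0"
    using sum_atMost_shift_balance[where c = c and d = d and n = n and F = F] jacobi_coeff_shift[of _ n al be]
    by (simp add: sum_subtractf c_def d_def)
  finally show ?thesis .
qed

section \<open>The Stieltjes relation for the zeros\<close>

lemma prod_linear_factors_dvd:
  fixes p :: "'a :: idom poly"
  assumes "finite J" "inj_on z J" "\<forall>j\<in>J. poly p (z j) = 0"
  shows "(\<Prod>j\<in>J. [:- z j, 1:]) dvd p"
  using assms
proof (induction J arbitrary: p rule: finite_induct)
  case empty
  then show ?case by simp
next
  case (insert a J)
  obtain q where q: "p = [:- z a, 1:] * q"
    using insert.prems(2) poly_eq_0_iff_dvd by blast
  have "poly q (z j) = 0" if "j \<in> J" for j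
  proof -
    have "z j \<noteq> z a"
      using insert.prems(1) insert.hyps(2) that by (auto simp: inj_on_def)
    moreover have "poly p (z j) = 0" using insert.prems(2) that by simp
    ultimately show ?thesis by (simp add: q)
  qed
  then have "(\<Prod>j\<in>J. [:- z j, 1:]) dvd q"
    using insert.IH insert.prems(1) by (simp add: inj_on_insert)
  then have "[:- z a, 1:] * (\<Prod>j\<in>J. [:- z j, 1:]) dvd p"
    unfolding q by (rule mult_dvd_mono[OF dvd_refl])
  moreover have "(\<Prod>j\<in>insert a J. [:- z j, 1:]) = [:- z a, 1:] * (\<Prod>j\<in>J. [:- z j, 1:])"
    by (rule prod.insert[OF insert.hyps])
  ultimately show ?case
    by (simp only:)
qed

lemma poly_eq_smult_prod_roots:
  fixes p :: "'a :: idom poly"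
  assumes "finite J" "inj_on z J" "\<forall>j\<in>J. poly p (z j) = 0" "p \<noteq> 0" "degree p \<le> card J"
  shows "p = smult (lead_coeff p) (\<Prod>j\<in>J. [:- z j, 1:])"
proof -
  let ?r = "\<Prod>j\<in>J. [:- z j, 1:]"
  obtain q where q: "p = ?r * q"
    using prod_linear_factors_dvd[OF assms(1-3)] by (elim dvdE)
  have r: "?r \<noteq> 0" "degree ?r = card J" "lead_coeff ?r = 1"
    using assms(1) by (simp, subst degree_prod_eq_sum_degree, simp_all add: lead_coeff_prod)
  with q assms(4,5) have "degree q = 0"
    by (auto simp: degree_mult_eq)
  then obtain c where "q = [:c:]"
    by (rule degree_eq_zeroE)
  then have p: "p = smult c ?r"
    by (simp add: q)
  have "lead_coeff p = c"
    unfolding p lead_coeff_smult r(3) by simp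
  then show ?thesis
    using p by (simp only:)
qed

lemma poly_pderiv_prod_linear_factors:
  fixes x :: "'a :: field"
  assumes "finite J" "x \<notin> z ` J"
  shows "poly (pderiv (\<Prod>j\<in>J. [:- z j, 1:])) x
       = poly (\<Prod>j\<in>J. [:- z j, 1:]) x * (\<Sum>j\<in>J. 1 / (x - z j))"
proof -
  have "poly (\<Prod>k\<in>J - {j}. [:- z k, 1:]) x = poly (\<Prod>k\<in>J. [:- z k, 1:]) x / (x - z j)" if "j \<in> J" for j
  proof -
    from assms(2) that have "x - z j \<noteq> 0" by auto
    with assms(1) that show ?thesis by (simp add: poly_prod prod.remove[of J j] field_simps)
  qed
  then show ?thesis
    by (simp add: pderiv_prod pderiv_pCons poly_sum sum_distrib_left)
qed

lemma poly_pderiv_at_root_of_split_poly: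
  fixes z :: "'b \<Rightarrow> 'a :: field"
  assumes "finite J" "inj_on z J" "i \<in> J" "c \<noteq> 0"
  defines "p \<equiv> smult c (\<Prod>j\<in>J. [:- z j, 1:])"
  shows "poly (pderiv p) (z i) \<noteq> 0"
    and "poly (pderiv (pderiv p)) (z i) = 2 * poly (pderiv p) (z i) * (\<Sum>j\<in>J - {i}. 1 / (z i - z j))"
proof -
  define r where "r = smult c (\<Prod>j\<in>J - {i}. [:- z j, 1:])"
  have p: "p = [:- z i, 1:] * r"
    unfolding p_def r_def using prod.remove[OF assms(1,3), of "\<lambda>j. [:- z j, 1:]"] by simp
  have "z i \<notin> z ` (J - {i})"
    using assms(2,3) by (auto simp: inj_on_def)
  then have r_root: "poly r (z i) \<noteq> 0"
    and r_deriv: "poly (pderiv r) (z i) = poly r (z i) * (\<Sum>j\<in>J - {i}. 1 / (z i - z j))"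
    using assms(1,4) poly_pderiv_prod_linear_factors[of "J - {i}" "z i" z]
    by (auto simp: r_def poly_prod pderiv_smult)
  have d1: "pderiv p = [:- z i, 1:] * pderiv r + r"
    unfolding p pderiv_mult by (simp add: pderiv_pCons)
  have d2: "pderiv (pderiv p) = [:- z i, 1:] * pderiv (pderiv r) + (pderiv r + pderiv r)"
    unfolding d1 pderiv_add pderiv_mult by (simp add: pderiv_pCons)
  have p_deriv: "poly (pderiv p) (z i) = poly r (z i)"
    by (simp add: d1)
  with r_root show "poly (pderiv p) (z i) \<noteq> 0"
    by simp
  show "poly (pderiv (pderiv p)) (z i) = 2 * poly (pderiv p) (z i) * (\<Sum>j\<in>J - {i}. 1 / (z i - z j))"
    unfolding d2 p_deriv by (simp add: r_deriv)
qed

lemma jacobiP_zeros_sum_inverse_differences: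
  fixes z :: "'b \<Rightarrow> real"
  assumes "al > -1" "be > -1" "finite J" "inj_on z J" "card J = n"
    and zeros: "\<forall>j\<in>J. jacobiP n al be (z j) = 0" and "i \<in> J"
  shows "(\<Sum>j\<in>J - {i}. 1 / (z i - z j)) = ((al + be + 2) * z i + al - be) / (2 * (1 - (z i)\<^sup>2))"
proof -
  define P where "P = jacobi_poly n al be"
  define x where "x = z i"
  define S where "S = (\<Sum>j\<in>J - {i}. 1 / (x - z j))"
  have "poly P 1 > 0"
    using jacobiP_pos[OF assms(1,2)] by (simp add: P_def poly_jacobi_poly)
  then have "P \<noteq> 0" by auto
  moreover have "\<forall>j\<in>J. poly P (z j) = 0"
    using zeros by (simp add: P_def poly_jacobi_poly)
  ultimately have "P = smult (lead_coeff P) (\<Prod>j\<in>J. [:- z j, 1:])" "lead_coeff P \<noteq> 0"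
    using poly_eq_smult_prod_roots[OF assms(3,4)] degree_jacobi_poly[of n al be] assms(5)
    by (simp_all add: P_def)
  then have P1: "poly (pderiv P) x \<noteq> 0" and P2: "poly (pderiv (pderiv P)) x = 2 * poly (pderiv P) x * S"
    using poly_pderiv_at_root_of_split_poly[OF assms(3,4,7)] unfolding x_def S_def by metis+
  have "poly P x = 0"
    using zeros assms(7) by (simp add: P_def x_def poly_jacobi_poly)
  then have "poly (pderiv P) x * (2 * (1 - x\<^sup>2) * S - ((al + be + 2) * x + al - be)) = 0"
    using jacobi_poly_ode[of x n al be] P2 by (simp add: P_def algebra_simps)
  with P1 have "2 * (1 - x\<^sup>2) * S = (al + be + 2) * x + al - be"
    by simp
  moreover have "\<bar>x\<bar> < 1"
    using jacobiP_root_bounds[OF assms(1,2)] zeros assms(7) unfolding x_def by blast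
  then have "1 - x\<^sup>2 \<noteq> 0"
    using abs_square_less_1[of x] by simp
  ultimately show ?thesis
    by (simp add: S_def x_def field_simps)
qed

section \<open>Divided differences of powers\<close>

fun power_taylor_rem :: "nat \<Rightarrow> real \<Rightarrow> real poly" where
  "power_taylor_rem 0 y = 0"
| "power_taylor_rem (Suc n) y = smult y (power_taylor_rem n y) - smult (real n) (monom 1 (n - 1))"

lemma power_diff_taylor_rem:
  "x ^ n - y ^ n = real n * x ^ (n - 1) * (x - y) + (x - y)\<^sup>2 * poly (power_taylor_rem n y) x"
proof (induction n)
  case 0
  then show ?case by simp
next
  case (Suc n)
  have "x ^ Suc n - y ^ Suc n = x * (x ^ n - y ^ n) + (x - y) * (x ^ n - (x ^ n - y ^ n))"
    by (simp add: algebra_simps)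
  then show ?case
    unfolding Suc.IH by (cases n) (simp_all add: poly_monom algebra_simps power2_eq_square)
qed

lemma poly_power_taylor_rem_diag:
  "poly (power_taylor_rem n x) x = - (real n * (real n - 1) / 2) * x ^ (n - 2)"
proof (induction n)
  case 0
  then show ?case by simp
next
  case (Suc n)
  show ?case
  proof (cases "n \<le> 1")
    case True
    then consider "n = 0" | "n = 1" by linarith
    then show ?thesis by cases simp_all
  next
    case False
    then have "n = Suc (Suc (n - 2))" by simp
    then obtain j where j: "n = Suc (Suc j)" by blast
    have step: "poly (power_taylor_rem (Suc n) x) x = x * poly (power_taylor_rem n x) x - real n * x ^ (n - 1)"
      by (simp add: poly_monom)
    have "x ^ (n - 1) = x * x ^ (n - 2)" "Suc n - 2 = n - 1" using j by simp_all
    then show ?thesis unfolding step Suc.IH by (simp add: field_simps)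
  qed
qed

lemma degree_power_taylor_rem: "degree (power_taylor_rem n y) \<le> n - 2"
proof (induction n)
  case 0
  then show ?case by simp
next
  case (Suc n)
  then show ?case
    by (auto intro!: degree_diff_le order.trans[OF degree_smult_le] order.trans[OF degree_monom_le])
qed

lemma coeff_power_taylor_rem: "coeff (power_taylor_rem (Suc (Suc n)) y) n = - (real n + 1)"
proof -
  have "coeff (power_taylor_rem (Suc n) y) n = 0"
  proof (cases n)
    case (Suc j)
    then show ?thesis
      using degree_power_taylor_rem[of "Suc n" y] by (intro coeff_eq_0) (simp del: power_taylor_rem.simps)
  qed simp
  then show ?thesis by (simp add: coeff_monom)
qed

definition weighted_power_rem :: "nat \<Rightarrow> real \<Rightarrow> real poly" where
  "weighted_power_rem m y = power_taylor_rem m y - power_taylor_rem (m + 2) y"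

lemma weighted_power_diff_quotient:
  fixes x y :: real
  assumes "x \<noteq> y"
  shows "((1 - x\<^sup>2) * x ^ m - (1 - y\<^sup>2) * y ^ m) / (x - y)\<^sup>2
       = (real m * x ^ (m - 1) - (real m + 2) * x ^ (m + 1)) / (x - y) + poly (weighted_power_rem m y) x"
proof -
  have "(1 - x\<^sup>2) * x ^ m - (1 - y\<^sup>2) * y ^ m = (x ^ m - y ^ m) - (x ^ (m + 2) - y ^ (m + 2))"
    by (simp add: algebra_simps power2_eq_square)
  also have "\<dots> = (x - y) * (real m * x ^ (m - 1) - (real m + 2) * x ^ (m + 1))
                   + (x - y)\<^sup>2 * poly (weighted_power_rem m y) x"
    unfolding power_diff_taylor_rem[of x m y] power_diff_taylor_rem[of x "m + 2" y] weighted_power_rem_def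
    by (simp add: algebra_simps)
  finally have "(1 - x\<^sup>2) * x ^ m - (1 - y\<^sup>2) * y ^ m = \<dots>" .
  moreover have "x - y \<noteq> 0"
    using assms by simp
  ultimately show ?thesis
    by (simp add: add_divide_distrib power2_eq_square)
qed

lemma poly_weighted_power_rem_diag:
  "poly (weighted_power_rem m x) x
     = (real m + 2) * (real m + 1) / 2 * x ^ m - real m * (real m - 1) / 2 * x ^ (m - 2)"
  unfolding weighted_power_rem_def poly_diff poly_power_taylor_rem_diag by (simp add: algebra_simps)

lemma degree_weighted_power_rem_minus_monom:
  "degree (weighted_power_rem m y - monom (real m + 1) m) \<le> m - 1"
proof (rule degree_le, intro allI impI)
  fix k assume "m - 1 < k"
  then consider "k = m" "m \<ge> 1" | "m < k" by linarith
  then show "coeff (weighted_power_rem m y - monom (real m + 1) m) k = 0"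
  proof cases
    case 1
    then show ?thesis
      using degree_power_taylor_rem[of m y] coeff_power_taylor_rem[of m y]
      by (simp add: weighted_power_rem_def coeff_eq_0 coeff_monom)
  next
    case 2
    then show ?thesis
      using degree_power_taylor_rem[of m y] degree_power_taylor_rem[of "m + 2" y]
      by (simp add: weighted_power_rem_def coeff_eq_0 coeff_monom)
  qed
qed

section \<open>The matrix S_tilde on power vectors\<close>

lemma S_tilde_mult_sqrt_weight:
  fixes z f :: "nat \<Rightarrow> real"
  assumes "i \<in> {1..N}" "\<forall>j\<in>{1..N}. \<bar>z j\<bar> \<le> 1"
  shows "(\<Sum>j=1..N. S_tilde N a b z i j * (f j * sqrt (1 - (z j)\<^sup>2)))
       = sqrt (1 - (z i)\<^sup>2) *
           (4 * (\<Sum>j\<in>{1..N} - {i}. ((1 - (z i)\<^sup>2) * f i - (1 - (z j)\<^sup>2) * f j) / (z i - z j)\<^sup>2)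
            + (2 * (a + b) * (1 + z i) / (1 - z i) + 2 * b * (1 - z i) / (1 + z i)) * f i)"
proof -
  define w where "w j = 1 - (z j)\<^sup>2" for j
  have sqrt_w: "sqrt (w j) * sqrt (w j) = w j" if "j \<in> {1..N}" for j
    using assms(2) that abs_square_le_1[of "z j"] by (simp add: w_def)
  have off_diag: "S_tilde N a b z i j * (f j * sqrt (w j)) = - 4 * sqrt (w i) * (w j * f j / (z i - z j)\<^sup>2)"
    if "j \<in> {1..N} - {i}" for j
    using that sqrt_w[of j] by (auto simp: S_tilde_def w_def real_sqrt_mult)
  define R where "R = 2 * (a + b) * (1 + z i) / (1 - z i) + 2 * b * (1 - z i) / (1 + z i)"
  have diag: "S_tilde N a b z i i = 4 * (\<Sum>j\<in>{1..N} - {i}. w i / (z i - z j)\<^sup>2) + R"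
    by (simp add: S_tilde_def w_def R_def)
  have "(\<Sum>j=1..N. S_tilde N a b z i j * (f j * sqrt (w j)))
      = S_tilde N a b z i i * (f i * sqrt (w i)) + (\<Sum>j\<in>{1..N} - {i}. S_tilde N a b z i j * (f j * sqrt (w j)))"
    using assms(1) by (simp add: sum.remove)
  also have "\<dots> = S_tilde N a b z i i * (f i * sqrt (w i))
      + (\<Sum>j\<in>{1..N} - {i}. - 4 * sqrt (w i) * (w j * f j / (z i - z j)\<^sup>2))"
    using off_diag by simp
  also have "\<dots> = sqrt (w i) * (4 * (\<Sum>j\<in>{1..N} - {i}. (w i * f i - w j * f j) / (z i - z j)\<^sup>2) + R * f i)"
    unfolding diag by (simp add: diff_divide_distrib sum_subtractf sum_negf sum_distrib_left sum_distrib_right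
        algebra_simps)
  finally show ?thesis
    by (simp add: w_def R_def)
qed

lemma S_tilde_power_row_algebra:
  fixes x a b :: real and m :: nat
  assumes "\<bar>x\<bar> < 1" "m \<ge> 1"
  shows "4 * ((real m * x ^ (m - 1) - (real m + 2) * x ^ (m + 1)) * (((a + 2 * b) * x + a) / (2 * (1 - x\<^sup>2)))
             - poly (weighted_power_rem m x) x)
           + (2 * (a + b) * (1 + x) / (1 - x) + 2 * b * (1 - x) / (1 + x)) * x ^ m
       = 2 * (real m + 1) * (a + 2 * b - 2 - real m) * x ^ m
           + 2 * real m * a * x ^ (m - 1) + 2 * real m * (real m - 1) * x ^ (m - 2)"
proof -
  define p where "p = 1 / (1 - x)"
  define q where "q = 1 / (1 + x)"
  have "1 - x \<noteq> 0" "1 + x \<noteq> 0"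
    using assms(1) by auto
  then have pq: "p * (1 - x) = 1" "q * (1 + x) = 1"
    and fractions: "((a + 2 * b) * x + a) / (2 * (1 - x\<^sup>2)) = ((a + 2 * b) * x + a) * p * q / 2"
      "2 * (a + b) * (1 + x) / (1 - x) = 2 * (a + b) * (1 + x) * p"
      "2 * b * (1 - x) / (1 + x) = 2 * b * (1 - x) * q"
    by (simp_all add: p_def q_def power2_eq_square field_simps)
  have key: "4 * ((real m * t - (real m + 2) * (x\<^sup>2 * t)) * (((a + 2 * b) * x + a) * p * q / 2)
             - ((real m + 2) * (real m + 1) / 2 * (x * t) - real m * (real m - 1) / 2 * T))
           + (2 * (a + b) * (1 + x) * p + 2 * b * (1 - x) * q) * (x * t)
       = 2 * (real m + 1) * (a + 2 * b - 2 - real m) * (x * t) + 2 * real m * a * t + 2 * real m * (real m - 1) * T"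
    for t T :: real
    using pq by algebra
  obtain k where "m = Suc k"
    using assms(2) by (cases m) auto
  then have "x ^ m = x * x ^ (m - 1)" "x ^ (m + 1) = x\<^sup>2 * x ^ (m - 1)"
    by (simp_all add: power2_eq_square)
  then show ?thesis
    unfolding poly_weighted_power_rem_diag fractions by (simp only: key)
qed

lemma S_tilde_mult_power_row:
  fixes z :: "nat \<Rightarrow> real" and m :: nat
  assumes "m \<ge> 1" "inj_on z {1..N}" "\<forall>j\<in>{1..N}. \<bar>z j\<bar> < 1" "i \<in> {1..N}"
    and stieltjes: "(\<Sum>j\<in>{1..N} - {i}. 1 / (z i - z j)) = ((a + 2 * b) * z i + a) / (2 * (1 - (z i)\<^sup>2))"
  shows "(\<Sum>j=1..N. S_tilde N a b z i j * (z j ^ m * sqrt (1 - (z j)\<^sup>2)))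
       = (2 * (real m + 1) * (a + 2 * b - 2 - real m) * z i ^ m
          + 2 * real m * a * z i ^ (m - 1) + 2 * real m * (real m - 1) * z i ^ (m - 2)
          + 4 * (\<Sum>j\<in>{1..N}. poly (weighted_power_rem m (z j)) (z i))) * sqrt (1 - (z i)\<^sup>2)"
proof -
  define x where "x = z i"
  define g where "g = real m * x ^ (m - 1) - (real m + 2) * x ^ (m + 1)"
  define G where "G j = poly (weighted_power_rem m (z j)) x" for j
  define c where "c = ((a + 2 * b) * x + a) / (2 * (1 - x\<^sup>2))"
  define R where "R = 2 * (a + b) * (1 + x) / (1 - x) + 2 * b * (1 - x) / (1 + x)"
  define Q where "Q = (\<Sum>j\<in>{1..N} - {i}. ((1 - x\<^sup>2) * x ^ m - (1 - (z j)\<^sup>2) * z j ^ m) / (x - z j)\<^sup>2)"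
  have neq: "x \<noteq> z j" if "j \<in> {1..N} - {i}" for j
    using that assms(4) inj_on_eq_iff[OF assms(2)] unfolding x_def by blast
  have "Q = (\<Sum>j\<in>{1..N} - {i}. g / (x - z j) + G j)"
    unfolding Q_def by (rule sum.cong) (simp_all add: weighted_power_diff_quotient neq g_def G_def)
  also have "\<dots> = g * (\<Sum>j\<in>{1..N} - {i}. 1 / (x - z j)) + (\<Sum>j\<in>{1..N} - {i}. G j)"
    by (simp add: sum.distrib sum_distrib_left)
  also have "(\<Sum>j\<in>{1..N} - {i}. G j) = (\<Sum>j\<in>{1..N}. G j) - G i"
    using assms(4) by (simp add: sum_diff1)
  finally have Q: "Q = g * c - G i + (\<Sum>j\<in>{1..N}. G j)"
    using stieltjes by (simp add: x_def c_def)
  have "(\<Sum>j=1..N. S_tilde N a b z i j * (z j ^ m * sqrt (1 - (z j)\<^sup>2))) = sqrt (1 - x\<^sup>2) * (4 * Q + R * x ^ m)"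
    unfolding Q_def R_def x_def by (rule S_tilde_mult_sqrt_weight) (use assms(3,4) in auto)
  also have "4 * Q + R * x ^ m = (4 * (g * c - G i) + R * x ^ m) + 4 * (\<Sum>j\<in>{1..N}. G j)"
    unfolding Q by (simp add: algebra_simps)
  also have "4 * (g * c - G i) + R * x ^ m = 2 * (real m + 1) * (a + 2 * b - 2 - real m) * x ^ m
        + 2 * real m * a * x ^ (m - 1) + 2 * real m * (real m - 1) * x ^ (m - 2)"
    unfolding g_def G_def c_def R_def x_def[symmetric] using assms(1,3,4)
    by (intro S_tilde_power_row_algebra) (auto simp: x_def)
  finally show ?thesis
    unfolding x_def[symmetric] G_def[symmetric] by (simp only: mult.commute)
qed

lemma S_tilde_power_vector:
  fixes z :: "nat \<Rightarrow> real" and m :: nat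
  assumes "m \<ge> 1" "inj_on z {1..N}" "\<forall>j\<in>{1..N}. \<bar>z j\<bar> < 1"
    and stieltjes: "\<forall>i\<in>{1..N}. (\<Sum>j\<in>{1..N} - {i}. 1 / (z i - z j))
                              = ((a + 2 * b) * z i + a) / (2 * (1 - (z i)\<^sup>2))"
  shows "\<exists>p :: real poly. degree p \<le> m - 1 \<and>
           (\<forall>i\<in>{1..N}. (\<Sum>j=1..N. S_tilde N a b z i j * (z j ^ m * sqrt (1 - (z j)\<^sup>2)))
              = (2 * (real m + 1) * (2 * real N + a + 2 * b - 2 - real m) * z i ^ m + poly p (z i))
                * sqrt (1 - (z i)\<^sup>2))"
proof (intro exI conjI ballI)
  define p where "p = smult (2 * real m * a) (monom 1 (m - 1)) + smult (2 * real m * (real m - 1)) (monom 1 (m - 2))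
    + smult 4 (\<Sum>j\<in>{1..N}. weighted_power_rem m (z j) - monom (real m + 1) m)"
  show "degree p \<le> m - 1"
    unfolding p_def using degree_weighted_power_rem_minus_monom
    by (intro degree_add_le order.trans[OF degree_smult_le] degree_sum_le order.trans[OF degree_monom_le]) auto
  fix i assume i: "i \<in> {1..N}"
  have poly_p: "poly p (z i) = 2 * real m * a * z i ^ (m - 1) + 2 * real m * (real m - 1) * z i ^ (m - 2)
      + 4 * (\<Sum>j\<in>{1..N}. poly (weighted_power_rem m (z j)) (z i)) - 4 * real N * (real m + 1) * z i ^ m"
    by (simp add: p_def poly_sum poly_monom sum_subtractf algebra_simps)
  show "(\<Sum>j=1..N. S_tilde N a b z i j * (z j ^ m * sqrt (1 - (z j)\<^sup>2)))
      = (2 * (real m + 1) * (2 * real N + a + 2 * b - 2 - real m) * z i ^ m + poly p (z i)) * sqrt (1 - (z i)\<^sup>2)"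
    unfolding S_tilde_mult_power_row[OF assms(1-3) i stieltjes[rule_format, OF i]] poly_p
    by (simp add: algebra_simps)
qed

theorem lemma3p4:
  fixes N :: nat and a b :: real and z :: "nat \<Rightarrow> real"
  assumes "a \<ge> 0" and "b > 0"
    and "strict_mono_on {1..N} z"
    and "{x. jacobiP N (a + b - 1) (b - 1) x = 0} = z ` {1..N}"
  shows "\<forall>k\<in>{2..N}. \<exists>p :: real poly. degree p \<le> k - 2 \<and>
           (\<forall>i\<in>{1..N}.
              (\<Sum>j=1..N. S_tilde N a b z i j * ((z j) ^ (k - 1) * sqrt (1 - (z j)\<^sup>2)))
              = (2 * real k * (2 * real N + (a + b - 1) + (b - 1) + 1 - real k) * (z i) ^ (k - 1)
                 + poly p (z i)) * sqrt (1 - (z i)\<^sup>2))"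
proof
  fix k assume k: "k \<in> {2..N}"
  have params: "a + b - 1 > -1" "b - 1 > -1"
    using assms(1,2) by auto
  have inj: "inj_on z {1..N}"
    using assms(3) by (rule strict_mono_on_imp_inj_on)
  have zeros: "\<forall>j\<in>{1..N}. jacobiP N (a + b - 1) (b - 1) (z j) = 0"
    using assms(4) by blast
  then have "\<forall>j\<in>{1..N}. \<bar>z j\<bar> < 1"
    using jacobiP_root_bounds[OF params] by blast
  moreover have "\<forall>i\<in>{1..N}. (\<Sum>j\<in>{1..N} - {i}. 1 / (z i - z j))
                              = ((a + 2 * b) * z i + a) / (2 * (1 - (z i)\<^sup>2))"
    using jacobiP_zeros_sum_inverse_differences[OF params _ inj _ zeros] by simp
  moreover have "k - 1 \<ge> 1" "k - 1 - 1 = k - 2" "real (k - 1) + 1 = real k"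
    using k by auto
  ultimately show "\<exists>p :: real poly. degree p \<le> k - 2 \<and>
           (\<forall>i\<in>{1..N}.
              (\<Sum>j=1..N. S_tilde N a b z i j * ((z j) ^ (k - 1) * sqrt (1 - (z j)\<^sup>2)))
              = (2 * real k * (2 * real N + (a + b - 1) + (b - 1) + 1 - real k) * (z i) ^ (k - 1)
                 + poly p (z i)) * sqrt (1 - (z i)\<^sup>2))"
    using S_tilde_power_vector[OF _ inj, of "k - 1" a b] by (simp add: algebra_simps)
qed

end
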